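(* Let $A=\mathbb{C}[x,y,z]$ and let $B$ be $A$, or its quotient field $Q(A)$, or the $M$-adic completion $\widehat A$ of $A$ at a maximal ideal $M$. Let $a,b,c\in B$. Then $c\,\mathrm{grad}(a)$ and $\mathrm{grad}(b)$ are compatible if and only if $\det\mathrm{Jac}(a,b,c)=0$.
   Context: $\mathrm{grad}(a)=(a_x,a_y,a_z)$ (partial derivatives, extended to $Q(A)$ by the quotient rule and to $\widehat A$ by continuity), $\mathrm{Jac}(f,g,h)$ is the matrix with rows $\mathrm{grad}(f),\mathrm{grad}(g),\mathrm{grad}(h)$. $F=(f,g,h)\in B^3$ is a Poisson triple on $B$ if there is a Poisson bracket on $B$ with $\{y,z\}=f$, $\{z,x\}=g$, $\{x,y\}=h$; two Poisson triples $F,G$ are compatible if $\lambda F+\mu G$ is a Poisson triple on $B$ for all $\lambda,\mu\in\mathbb{C}$. *)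

theory Defs
  imports Complex_Main "HOL-Computational_Algebra.Polynomial" "HOL-Computational_Algebra.Fraction_Field"
    "HOL-Computational_Algebra.Formal_Power_Series"
begin

text \<open>B is a commutative ring, with the C-algebra structure given by an embedding
  emb of the constants, and distinguished coordinate elements x, y, z.\<close>

definition is_poisson_bracket :: "(complex \<Rightarrow> 'b::comm_ring_1) \<Rightarrow> ('b \<Rightarrow> 'b \<Rightarrow> 'b) \<Rightarrow> bool" where
  "is_poisson_bracket emb P \<longleftrightarrow>
     (\<forall>a b c. P (a + b) c = P a c + P b c) \<and>
     (\<forall>k a b. P (emb k * a) b = emb k * P a b) \<and>
     (\<forall>a b. P a b = - P b a) \<and>
     (\<forall>a b c. P a (b * c) = b * P a c + P a b * c) \<and>
     (\<forall>a b c. P a (P b c) + P b (P c a) + P c (P a b) = 0)"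

definition poisson_triple ::
  "(complex \<Rightarrow> 'b::comm_ring_1) \<Rightarrow> 'b \<Rightarrow> 'b \<Rightarrow> 'b \<Rightarrow> 'b \<times> 'b \<times> 'b \<Rightarrow> bool" where
  "poisson_triple emb x y z F \<longleftrightarrow>
     (\<exists>P. is_poisson_bracket emb P \<and>
          P y z = fst F \<and> P z x = fst (snd F) \<and> P x y = snd (snd F))"

definition triple_lincomb ::
  "(complex \<Rightarrow> 'b::comm_ring_1) \<Rightarrow> complex \<Rightarrow> complex \<Rightarrow> 'b \<times> 'b \<times> 'b \<Rightarrow> 'b \<times> 'b \<times> 'b \<Rightarrow> 'b \<times> 'b \<times> 'b" where
  "triple_lincomb emb l m F G =
     (emb l * fst F + emb m * fst G,
      emb l * fst (snd F) + emb m * fst (snd G),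
      emb l * snd (snd F) + emb m * snd (snd G))"

definition compatible_triples ::
  "(complex \<Rightarrow> 'b::comm_ring_1) \<Rightarrow> 'b \<Rightarrow> 'b \<Rightarrow> 'b \<Rightarrow> 'b \<times> 'b \<times> 'b \<Rightarrow> 'b \<times> 'b \<times> 'b \<Rightarrow> bool" where
  "compatible_triples emb x y z F G \<longleftrightarrow>
     (\<forall>l m. poisson_triple emb x y z (triple_lincomb emb l m F G))"

definition grad3 :: "('b \<Rightarrow> 'b) \<Rightarrow> ('b \<Rightarrow> 'b) \<Rightarrow> ('b \<Rightarrow> 'b) \<Rightarrow> 'b \<Rightarrow> 'b \<times> 'b \<times> 'b" where
  "grad3 dx dy dz a = (dx a, dy a, dz a)"

definition scale_triple :: "'b::times \<Rightarrow> 'b \<times> 'b \<times> 'b \<Rightarrow> 'b \<times> 'b \<times> 'b" where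
  "scale_triple c F = (c * fst F, c * fst (snd F), c * snd (snd F))"

definition det3 :: "'b::comm_ring_1 \<times> 'b \<times> 'b \<Rightarrow> 'b \<times> 'b \<times> 'b \<Rightarrow> 'b \<times> 'b \<times> 'b \<Rightarrow> 'b" where
  "det3 u v w = (case u of (u1, u2, u3) \<Rightarrow> case v of (v1, v2, v3) \<Rightarrow> case w of (w1, w2, w3) \<Rightarrow>
      u1 * (v2 * w3 - v3 * w2) - u2 * (v1 * w3 - v3 * w1) + u3 * (v1 * w2 - v2 * w1))"

definition jac_det :: "('b::comm_ring_1 \<Rightarrow> 'b) \<Rightarrow> ('b \<Rightarrow> 'b) \<Rightarrow> ('b \<Rightarrow> 'b) \<Rightarrow> 'b \<Rightarrow> 'b \<Rightarrow> 'b \<Rightarrow> 'b" where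
  "jac_det dx dy dz a b c = det3 (grad3 dx dy dz a) (grad3 dx dy dz b) (grad3 dx dy dz c)"

section \<open>B = A = C[x,y,z], realised as C[x][y][z]\<close>

type_synonym polyA = "complex poly poly poly"

definition A_const :: "complex \<Rightarrow> polyA" where "A_const k = [:[:[:k:]:]:]"
definition A_x :: polyA where "A_x = [:[:[:0, 1:]:]:]"
definition A_y :: polyA where "A_y = [:[:0, 1:]:]"
definition A_z :: polyA where "A_z = [:0, 1:]"
definition A_dx :: "polyA \<Rightarrow> polyA" where "A_dx = map_poly (map_poly pderiv)"
definition A_dy :: "polyA \<Rightarrow> polyA" where "A_dy = map_poly pderiv"
definition A_dz :: "polyA \<Rightarrow> polyA" where "A_dz = pderiv"

type_synonym fracA = "polyA fract"

definition fract_deriv :: "('a::idom \<Rightarrow> 'a) \<Rightarrow> 'a fract \<Rightarrow> 'a fract" where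
  "fract_deriv d q = (SOME r. \<exists>n m. m \<noteq> 0 \<and> q = Fract n m \<and> r = Fract (d n * m - n * d m) (m * m))"

definition Q_const :: "complex \<Rightarrow> fracA" where "Q_const k = Fract (A_const k) 1"
definition Q_x :: fracA where "Q_x = Fract A_x 1"
definition Q_y :: fracA where "Q_y = Fract A_y 1"
definition Q_z :: fracA where "Q_z = Fract A_z 1"
definition Q_dx :: "fracA \<Rightarrow> fracA" where "Q_dx = fract_deriv A_dx"
definition Q_dy :: "fracA \<Rightarrow> fracA" where "Q_dy = fract_deriv A_dy"
definition Q_dz :: "fracA \<Rightarrow> fracA" where "Q_dz = fract_deriv A_dz"

section \<open>B = completion of A at the maximal ideal M = (x-p, y-q, z-r):
  C[[x-p]][[y-q]][[z-r]] = C[[X,Y,Z]] with x = p + X, y = q + Y, z = r + Z\<close>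

type_synonym serA = "complex fps fps fps"

definition S_const :: "complex \<Rightarrow> serA" where "S_const k = fps_const (fps_const (fps_const k))"
definition S_x :: "complex \<Rightarrow> serA" where "S_x p = fps_const (fps_const (fps_const p + fps_X))"
definition S_y :: "complex \<Rightarrow> serA" where "S_y q = fps_const (fps_const (fps_const q) + fps_X)"
definition S_z :: "complex \<Rightarrow> serA" where "S_z r = S_const r + fps_X"
definition S_dx :: "serA \<Rightarrow> serA" where
  "S_dx f = Abs_fps (\<lambda>n. Abs_fps (\<lambda>m. fps_deriv (fps_nth (fps_nth f n) m)))"
definition S_dy :: "serA \<Rightarrow> serA" where
  "S_dy f = Abs_fps (\<lambda>n. fps_deriv (fps_nth f n))"
definition S_dz :: "serA \<Rightarrow> serA" where "S_dz = fps_deriv"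

end

theory Submission
  imports Defs
begin

text \<open>A triple \<open>F\<close> defines the bracket \<open>{u, v} = F \<cdot> (grad u \<times> grad v)\<close>, which is bilinear,
  antisymmetric, Leibniz and has the prescribed values on the coordinates; its Jacobiator is
  \<open>-(F \<cdot> curl F) det Jac(u, v, w)\<close>. Conversely, by the chain rule every Poisson bracket with these
  coordinate values is this bracket, so \<open>F\<close> is a Poisson triple iff \<open>F \<cdot> curl F = 0\<close>. For
  \<open>F = \<lambda> c grad a + \<mu> grad b\<close> one computes \<open>F \<cdot> curl F = \<lambda>\<mu> det Jac(a, b, c)\<close>.
  The chain rule amounts to saying that a derivation killing \<open>x, y, z\<close> is zero: in \<open>A\<close> and \<open>Q(A)\<close>
  because \<open>x, y, z\<close> generate, and in the completion because such a derivation, applied to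
  a series in \<open>Z\<close> (and likewise \<open>Y\<close>, \<open>X\<close>), has values in \<open>\<Inter>\<^sub>n (Z\<^sup>n) = 0\<close>.\<close>

unbundle fps_syntax

section \<open>Derivations\<close>

definition derivation :: "('a::comm_ring_1 \<Rightarrow> 'a) \<Rightarrow> bool" where
  "derivation d \<longleftrightarrow> (\<forall>a b. d (a + b) = d a + d b) \<and> (\<forall>a b. d (a * b) = a * d b + d a * b)"

lemma derivation_add: "derivation d \<Longrightarrow> d (a + b) = d a + d b"
  by (simp add: derivation_def)

lemma derivation_mult: "derivation d \<Longrightarrow> d (a * b) = a * d b + d a * b"
  by (simp add: derivation_def)

lemma derivation_0: "derivation d \<Longrightarrow> d 0 = 0"
  using derivation_add[of d 0 0] by simp

lemma derivation_1: "derivation d \<Longrightarrow> d 1 = 0"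
  using derivation_mult[of d 1 1] by simp

lemma derivation_minus: "derivation d \<Longrightarrow> d (- a) = - d a"
  using derivation_add[of d a "- a"] derivation_0[of d] by (simp add: eq_neg_iff_add_eq_0 add.commute)

lemma derivation_diff: "derivation d \<Longrightarrow> d (a - b) = d a - d b"
  using derivation_add[of d a "- b"] derivation_minus[of d b] by simp

lemma derivation_sum: "derivation d \<Longrightarrow> d (sum f S) = (\<Sum>i\<in>S. d (f i))"
  by (induction S rule: infinite_finite_induct) (simp_all add: derivation_0 derivation_add)

lemma derivation_of_nat_mult: "derivation d \<Longrightarrow> d (of_nat n * a) = of_nat n * d a"
proof -
  assume d: "derivation d"
  have "d (of_nat n) = 0"
    by (induction n) (simp_all add: d derivation_0 derivation_1 derivation_add)
  then show ?thesis by (simp add: d derivation_mult)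
qed

lemmas derivation_laws = derivation_add derivation_mult derivation_diff derivation_minus derivation_0

lemma derivation_pderiv: "derivation (pderiv :: 'a::idom poly \<Rightarrow> _)"
  by (simp add: derivation_def pderiv_add pderiv_mult algebra_simps)

lemma derivation_map_poly:
  assumes d: "derivation d"
  shows "derivation (map_poly d)"
  unfolding derivation_def
proof (intro conjI allI)
  fix a b
  show "map_poly d (a + b) = map_poly d a + map_poly d b"
    by (intro poly_eqI) (simp add: coeff_map_poly derivation_0[OF d] derivation_add[OF d])
  show "map_poly d (a * b) = a * map_poly d b + map_poly d a * b"
    by (intro poly_eqI) (simp add: coeff_map_poly coeff_mult derivation_laws[OF d]
        derivation_sum[OF d] sum.distrib)
qed

lemma pderiv_map_poly_derivation:
  "derivation d \<Longrightarrow> pderiv (map_poly d p) = map_poly d (pderiv p)"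
  by (intro poly_eqI)
    (simp add: coeff_map_poly derivation_0 coeff_pderiv derivation_of_nat_mult del: of_nat_Suc)

definition map_fps :: "('a \<Rightarrow> 'a) \<Rightarrow> 'a fps \<Rightarrow> 'a fps" where
  "map_fps d f = Abs_fps (\<lambda>n. d (f $ n))"

lemma map_fps_nth [simp]: "map_fps d f $ n = d (f $ n)"
  by (simp add: map_fps_def)

lemma derivation_fps_deriv: "derivation (fps_deriv :: 'a::comm_ring_1 fps \<Rightarrow> _)"
  by (simp add: derivation_def)

lemma derivation_map_fps:
  assumes d: "derivation d"
  shows "derivation (map_fps d)"
  unfolding derivation_def
proof (intro conjI allI)
  fix a b
  show "map_fps d (a + b) = map_fps d a + map_fps d b"
    by (intro fps_ext) (simp add: derivation_add[OF d])
  show "map_fps d (a * b) = a * map_fps d b + map_fps d a * b"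
    by (intro fps_ext) (simp add: fps_mult_nth derivation_laws[OF d] derivation_sum[OF d] sum.distrib)
qed

lemma fps_deriv_map_fps_derivation:
  "derivation d \<Longrightarrow> fps_deriv (map_fps d f) = map_fps d (fps_deriv f)"
  by (intro fps_ext) (simp add: derivation_of_nat_mult del: of_nat_Suc)

lemma map_fps_map_fps: "map_fps d1 (map_fps d2 f) = map_fps (d1 \<circ> d2) f"
  by (intro fps_ext) simp

lemma map_fps_const: "derivation d \<Longrightarrow> map_fps d (fps_const c) = fps_const (d c)"
  by (intro fps_ext) (simp add: derivation_0)

lemma map_fps_X: "derivation d \<Longrightarrow> map_fps d fps_X = 0"
  by (intro fps_ext) (simp add: derivation_0 derivation_1 fps_X_def)

section \<open>Triples defining Poisson brackets\<close>

text \<open>\<open>derivation_eq_0\<close> is the chain rule in disguise: it makes every \<open>\<complex>\<close>-linear derivation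
  \<open>D\<close> equal to \<open>D x \<cdot> dx + D y \<cdot> dy + D z \<cdot> dz\<close>.\<close>

locale coordinate_derivations =
  fixes emb :: "complex \<Rightarrow> 'b::comm_ring_1" and x y z :: 'b and dx dy dz :: "'b \<Rightarrow> 'b"
  assumes emb_add: "emb (k1 + k2) = emb k1 + emb k2"
    and emb_1: "emb 1 = 1"
    and derivation_dx: "derivation dx" and derivation_dy: "derivation dy"
    and derivation_dz: "derivation dz"
    and d_emb: "dx (emb k) = 0" "dy (emb k) = 0" "dz (emb k) = 0"
    and d_commute: "dy (dx a) = dx (dy a)" "dz (dx a) = dx (dz a)" "dz (dy a) = dy (dz a)"
    and d_coordinates: "dx x = 1" "dx y = 0" "dx z = 0" "dy x = 0" "dy y = 1" "dy z = 0"
      "dz x = 0" "dz y = 0" "dz z = 1"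
    and derivation_eq_0: "derivation E \<Longrightarrow> (\<And>k a. E (emb k * a) = emb k * E a)
      \<Longrightarrow> E x = 0 \<Longrightarrow> E y = 0 \<Longrightarrow> E z = 0 \<Longrightarrow> E f = 0"
begin

lemmas d_simps = derivation_laws[OF derivation_dx] derivation_laws[OF derivation_dy]
  derivation_laws[OF derivation_dz] d_emb d_commute

lemma d_emb_mult: "dx (emb k * a) = emb k * dx a" "dy (emb k * a) = emb k * dy a"
  "dz (emb k * a) = emb k * dz a"
  by (simp_all add: d_simps)

definition triple_bracket :: "'b \<times> 'b \<times> 'b \<Rightarrow> 'b \<Rightarrow> 'b \<Rightarrow> 'b" where
  "triple_bracket F u v = fst F * (dy u * dz v - dz u * dy v) + fst (snd F) * (dz u * dx v - dx u * dz v)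
     + snd (snd F) * (dx u * dy v - dy u * dx v)"

definition dot_curl :: "'b \<times> 'b \<times> 'b \<Rightarrow> 'b" where
  "dot_curl F = fst F * (dy (snd (snd F)) - dz (fst (snd F)))
     + fst (snd F) * (dz (fst F) - dx (snd (snd F))) + snd (snd F) * (dx (fst (snd F)) - dy (fst F))"

lemma triple_bracket_jacobiator:
  "triple_bracket F u (triple_bracket F v w) + triple_bracket F v (triple_bracket F w u)
     + triple_bracket F w (triple_bracket F u v)
   = - dot_curl F * det3 (grad3 dx dy dz u) (grad3 dx dy dz v) (grad3 dx dy dz w)"
  by (cases F) (simp add: triple_bracket_def dot_curl_def det3_def grad3_def d_simps algebra_simps)

lemma triple_bracket_coordinates:
  "triple_bracket F y z = fst F" "triple_bracket F z x = fst (snd F)"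
  "triple_bracket F x y = snd (snd F)"
  by (simp_all add: triple_bracket_def d_coordinates)

lemma is_poisson_bracket_triple_bracket:
  assumes "dot_curl F = 0"
  shows "is_poisson_bracket emb (triple_bracket F)"
  unfolding is_poisson_bracket_def
proof (intro conjI allI)
  fix a b c
  show "triple_bracket F (a + b) c = triple_bracket F a c + triple_bracket F b c"
    by (simp add: triple_bracket_def d_simps algebra_simps)
  show "triple_bracket F a b = - triple_bracket F b a"
    by (simp add: triple_bracket_def algebra_simps)
  show "triple_bracket F a (b * c) = b * triple_bracket F a c + triple_bracket F a b * c"
    by (simp add: triple_bracket_def d_simps algebra_simps)
  show "triple_bracket F a (triple_bracket F b c) + triple_bracket F b (triple_bracket F c a)
      + triple_bracket F c (triple_bracket F a b) = 0"
    using triple_bracket_jacobiator[of F a b c] assms by simp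
next
  fix k a b
  show "triple_bracket F (emb k * a) b = emb k * triple_bracket F a b"
    by (simp add: triple_bracket_def d_simps algebra_simps)
qed

lemma derivation_chain_rule:
  assumes D: "derivation D" and D_emb: "\<And>k a. D (emb k * a) = emb k * D a"
  shows "D f = D x * dx f + D y * dy f + D z * dz f"
proof -
  let ?E = "\<lambda>f. D f - (D x * dx f + D y * dy f + D z * dz f)"
  have "derivation ?E"
    unfolding derivation_def by (simp add: derivation_laws[OF D] d_simps algebra_simps)
  moreover have "?E (emb k * a) = emb k * ?E a" for k a
    by (simp add: D_emb d_emb_mult) (simp add: algebra_simps)
  ultimately have "?E f = 0"
    by (rule derivation_eq_0) (simp_all add: d_coordinates)
  then show ?thesis by simp
qed

lemma dot_curl_eq_0_if_poisson_triple:
  assumes "poisson_triple emb x y z F"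
  shows "dot_curl F = 0"
proof -
  obtain P where P: "is_poisson_bracket emb P" and f: "P y z = fst F"
    and g: "P z x = fst (snd F)" and h: "P x y = snd (snd F)"
    using assms unfolding poisson_triple_def by blast
  have add: "\<And>a b c. P (a + b) c = P a c + P b c"
    and emb_left: "\<And>k a b. P (emb k * a) b = emb k * P a b"
    and antisym: "\<And>a b. P a b = - P b a" and leibniz: "\<And>a b c. P a (b * c) = b * P a c + P a b * c"
    and jacobi: "\<And>a b c. P a (P b c) + P b (P c a) + P c (P a b) = 0"
    using P unfolding is_poisson_bracket_def by blast+
  have "derivation (P u)" for u
    unfolding derivation_def using antisym add leibniz by (metis minus_add_distrib)
  moreover have "P u (emb k * a) = emb k * P u a" for u k a
    using antisym[of u "emb k * a"] antisym[of u a] emb_left[of k a u] by simp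
  ultimately have chain: "P u f = P u x * dx f + P u y * dy f + P u z * dz f" for u f
    by (rule derivation_chain_rule)
  have self: "P u u = 0" for u
  proof -
    \<comment> \<open>\<open>2\<close> is invertible in a \<open>\<complex>\<close>-algebra\<close>
    have "emb (1/2) * (P u u + P u u) = 0"
      using antisym[of u u] by simp
    then have "(emb (1/2) + emb (1/2)) * P u u = 0"
      by (simp add: algebra_simps)
    then show ?thesis by (simp add: emb_add[symmetric] emb_1)
  qed
  have "P x (fst F) + P y (fst (snd F)) + P z (snd (snd F)) = 0"
    using jacobi[of x y z] f g h by simp
  then show ?thesis
    using chain[of x "fst F"] chain[of y "fst (snd F)"] chain[of z "snd (snd F)"] self
      antisym[of x z] antisym[of y x] antisym[of z y] f g h
    by (simp add: dot_curl_def algebra_simps)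
qed

theorem poisson_triple_iff_dot_curl_eq_0: "poisson_triple emb x y z F \<longleftrightarrow> dot_curl F = 0"
  using dot_curl_eq_0_if_poisson_triple is_poisson_bracket_triple_bracket triple_bracket_coordinates
  unfolding poisson_triple_def by metis

lemma dot_curl_lincomb_gradients:
  "dot_curl (triple_lincomb emb l m (scale_triple c (grad3 dx dy dz a)) (grad3 dx dy dz b))
   = emb l * emb m * jac_det dx dy dz a b c"
  by (simp add: dot_curl_def triple_lincomb_def scale_triple_def jac_det_def grad3_def det3_def
      d_simps d_emb_mult algebra_simps)

theorem compatible_gradients_iff_jac_det_eq_0:
  "compatible_triples emb x y z (scale_triple c (grad3 dx dy dz a)) (grad3 dx dy dz b)
   \<longleftrightarrow> jac_det dx dy dz a b c = 0"
  unfolding compatible_triples_def poisson_triple_iff_dot_curl_eq_0 dot_curl_lincomb_gradients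
  by (metis emb_1 mult_1 mult_zero_left mult_zero_right)

end

section \<open>The polynomial ring \<open>A\<close>\<close>

lemma derivation_A_dx: "derivation A_dx"
  unfolding A_dx_def by (intro derivation_map_poly derivation_pderiv)

lemma derivation_A_dy: "derivation A_dy"
  unfolding A_dy_def by (intro derivation_map_poly derivation_pderiv)

lemma derivation_A_dz: "derivation A_dz"
  unfolding A_dz_def by (rule derivation_pderiv)

lemma A_d_commute:
  "A_dy (A_dx a) = A_dx (A_dy a)" "A_dz (A_dx a) = A_dx (A_dz a)" "A_dz (A_dy a) = A_dy (A_dz a)"
proof -
  have "A_dy (A_dx a) = map_poly (pderiv \<circ> map_poly pderiv) a"
    unfolding A_dx_def A_dy_def by (rule map_poly_map_poly) simp_all
  also have "pderiv \<circ> map_poly pderiv = map_poly pderiv \<circ> (pderiv :: complex poly poly \<Rightarrow> _)"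
    by (rule ext) (simp add: pderiv_map_poly_derivation[OF derivation_pderiv])
  also have "map_poly \<dots> a = A_dx (A_dy a)"
    unfolding A_dx_def A_dy_def by (rule map_poly_map_poly[symmetric]) simp_all
  finally show "A_dy (A_dx a) = A_dx (A_dy a)" .
  show "A_dz (A_dx a) = A_dx (A_dz a)"
    unfolding A_dx_def A_dz_def
    by (rule pderiv_map_poly_derivation[OF derivation_map_poly[OF derivation_pderiv]])
  show "A_dz (A_dy a) = A_dy (A_dz a)"
    unfolding A_dy_def A_dz_def by (rule pderiv_map_poly_derivation[OF derivation_pderiv])
qed

lemma A_d_coordinates:
  "A_dx A_x = 1" "A_dx A_y = 0" "A_dx A_z = 0"
  "A_dy A_x = 0" "A_dy A_y = 1" "A_dy A_z = 0"
  "A_dz A_x = 0" "A_dz A_y = 0" "A_dz A_z = 1"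
  by (simp_all add: A_dx_def A_dy_def A_dz_def A_x_def A_y_def A_z_def map_poly_pCons pderiv_pCons
      one_pCons)

lemma A_d_const: "A_dx (A_const k) = 0" "A_dy (A_const k) = 0" "A_dz (A_const k) = 0"
  by (simp_all add: A_dx_def A_dy_def A_dz_def A_const_def map_poly_pCons pderiv_pCons)

lemma A_const_add: "A_const (a + b) = A_const a + A_const b"
  by (simp add: A_const_def)

lemma A_const_1: "A_const 1 = 1"
  by (simp add: A_const_def one_pCons)

lemma derivation_eq_0_on_polyA_image:
  fixes E :: "'b::comm_ring_1 \<Rightarrow> 'b" and i :: "polyA \<Rightarrow> 'b"
  assumes E: "derivation E" and E_const: "\<And>k. E (i (A_const k)) = 0"
    and E_coordinates: "E (i A_x) = 0" "E (i A_y) = 0" "E (i A_z) = 0"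
    and i_add: "\<And>a b. i (a + b) = i a + i b" and i_mult: "\<And>a b. i (a * b) = i a * i b"
  shows "E (i p) = 0"
proof -
  have E_i_0: "E (i 0) = 0"
    using i_add[of 0 0] derivation_0[OF E] by simp
  have step: "E (i (s + t * w)) = 0" if "E (i s) = 0" "E (i t) = 0" "E (i w) = 0" for s t w
    using that by (simp add: i_add i_mult derivation_laws[OF E])
  have E_x_poly: "E (i [:[:c:]:]) = 0" for c :: "complex poly"
  proof (induction c)
    case (pCons k c)
    have "[:[:pCons k c:]:] = A_const k + A_x * [:[:c:]:]"
      by (simp add: A_const_def A_x_def)
    then show ?case using step[OF E_const E_coordinates(1) pCons.IH] by simp
  qed (simp add: E_i_0)
  have E_xy_poly: "E (i [:c:]) = 0" for c :: "complex poly poly"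
  proof (induction c)
    case (pCons k c)
    have "[:pCons k c:] = [:[:k:]:] + A_y * [:c:]"
      by (simp add: A_y_def)
    then show ?case using step[OF E_x_poly E_coordinates(2) pCons.IH] by simp
  qed (simp add: E_i_0)
  show "E (i p) = 0"
  proof (induction p)
    case (pCons k c)
    have "pCons k c = [:k:] + A_z * c"
      by (simp add: A_z_def)
    then show ?case using step[OF E_xy_poly E_coordinates(3) pCons.IH] by simp
  qed (simp add: E_i_0)
qed

lemma coordinate_derivations_A: "coordinate_derivations A_const A_x A_y A_z A_dx A_dy A_dz"
proof
  fix E :: "polyA \<Rightarrow> polyA" and f
  assume E: "derivation E" and E_emb: "\<And>k a. E (A_const k * a) = A_const k * E a"
    and "E A_x = 0" "E A_y = 0" "E A_z = 0"
  moreover have "E (A_const k) = 0" for k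
    using E_emb[of k 1] derivation_1[OF E] by simp
  ultimately show "E f = 0"
    using derivation_eq_0_on_polyA_image[of E id f] by simp
qed (simp_all add: A_const_add A_const_1 derivation_A_dx derivation_A_dy derivation_A_dz
    A_d_commute A_d_coordinates A_d_const)

section \<open>The fraction field \<open>Q(A)\<close>\<close>

lemma fract_deriv_Fract:
  fixes d :: "'a::idom \<Rightarrow> 'a"
  assumes d: "derivation d" and m: "m \<noteq> 0"
  shows "fract_deriv d (Fract n m) = Fract (d n * m - n * d m) (m * m)"
  unfolding fract_deriv_def
proof (rule someI2)
  show "\<exists>n' m'. m' \<noteq> 0 \<and> Fract n m = Fract n' m'
      \<and> Fract (d n * m - n * d m) (m * m) = Fract (d n' * m' - n' * d m') (m' * m')"
    using m by blast
next
  fix r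
  assume "\<exists>n' m'. m' \<noteq> 0 \<and> Fract n m = Fract n' m' \<and> r = Fract (d n' * m' - n' * d m') (m' * m')"
  then obtain n' m' where m': "m' \<noteq> 0" and eq: "Fract n m = Fract n' m'"
    and r: "r = Fract (d n' * m' - n' * d m') (m' * m')"
    by blast
  have cross: "n * m' = n' * m"
    using eq m m' by (simp add: eq_fract)
  have d_cross: "d n * m' + n * d m' = d n' * m + n' * d m"
    using arg_cong[OF cross, of d] by (simp add: derivation_mult[OF d] algebra_simps)
  have "(d n' * m' - n' * d m') * (m * m) - (d n * m - n * d m) * (m' * m')
      = - (m * m') * ((d n * m' + n * d m') - (d n' * m + n' * d m))
        + (d m * m' + d m' * m) * (n * m' - n' * m)"
    by (simp add: algebra_simps)
  also have "\<dots> = 0"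
    using cross d_cross by simp
  finally show "r = Fract (d n * m - n * d m) (m * m)"
    using r m m' by (simp add: eq_fract)
qed

lemma fract_deriv_Fract_1: "derivation d \<Longrightarrow> fract_deriv d (Fract a 1) = Fract (d a) 1"
  by (simp add: fract_deriv_Fract derivation_1)

lemma fract_deriv_add:
  fixes d :: "'a::idom \<Rightarrow> 'a"
  assumes d: "derivation d" and b: "b \<noteq> 0" and e: "e \<noteq> 0"
  shows "fract_deriv d (Fract a b + Fract c e) = fract_deriv d (Fract a b) + fract_deriv d (Fract c e)"
proof -
  have "fract_deriv d (Fract a b + Fract c e)
      = Fract (d (a * e + c * b) * (b * e) - (a * e + c * b) * d (b * e)) ((b * e) * (b * e))"
    using b e by (simp add: fract_deriv_Fract[OF d])
  also have "d (a * e + c * b) * (b * e) - (a * e + c * b) * d (b * e)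
      = (d a * b - a * d b) * (e * e) + (d c * e - c * d e) * (b * b)"
    by (simp add: derivation_laws[OF d] algebra_simps)
  also have "(b * e) * (b * e) = (b * b) * (e * e)"
    by (simp add: algebra_simps)
  finally show ?thesis
    using b e by (simp add: fract_deriv_Fract[OF d])
qed

lemma fract_deriv_mult:
  fixes d :: "'a::idom \<Rightarrow> 'a"
  assumes d: "derivation d" and b: "b \<noteq> 0" and e: "e \<noteq> 0"
  shows "fract_deriv d (Fract a b * Fract c e)
    = Fract a b * fract_deriv d (Fract c e) + fract_deriv d (Fract a b) * Fract c e"
proof -
  have "fract_deriv d (Fract a b * Fract c e)
      = Fract (d (a * c) * (b * e) - (a * c) * d (b * e)) ((b * e) * (b * e))"
    using b e by (simp add: fract_deriv_Fract[OF d])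
  also have "\<dots> = Fract ((b * e) * (d (a * c) * (b * e) - (a * c) * d (b * e)))
      ((b * e) * ((b * e) * (b * e)))"
    using b e by (intro mult_fract_cancel[symmetric]) simp
  also have "(b * e) * (d (a * c) * (b * e) - (a * c) * d (b * e))
      = a * (d c * e - c * d e) * (b * b * e) + (d a * b - a * d b) * c * (b * (e * e))"
    by (simp add: derivation_mult[OF d] algebra_simps)
  also have "(b * e) * ((b * e) * (b * e)) = (b * (e * e)) * (b * b * e)"
    by (simp add: algebra_simps)
  also have "Fract (a * (d c * e - c * d e) * (b * b * e) + (d a * b - a * d b) * c * (b * (e * e)))
      ((b * (e * e)) * (b * b * e))
    = Fract a b * fract_deriv d (Fract c e) + fract_deriv d (Fract a b) * Fract c e"
    using b e by (simp add: fract_deriv_Fract[OF d])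
  finally show ?thesis .
qed

lemma derivation_fract_deriv:
  fixes d :: "'a::idom \<Rightarrow> 'a"
  assumes d: "derivation d"
  shows "derivation (fract_deriv d)"
  unfolding derivation_def
proof (intro conjI allI)
  fix p q :: "'a fract"
  show "fract_deriv d (p + q) = fract_deriv d p + fract_deriv d q"
    by (cases p; cases q) (clarify, rule fract_deriv_add[OF d], assumption+)
  show "fract_deriv d (p * q) = p * fract_deriv d q + fract_deriv d p * q"
    by (cases p; cases q) (clarify, rule fract_deriv_mult[OF d], assumption+)
qed

lemma fract_deriv_commute:
  fixes d1 d2 :: "'a::idom \<Rightarrow> 'a"
  assumes d1: "derivation d1" and d2: "derivation d2" and commute: "\<And>a. d1 (d2 a) = d2 (d1 a)"
  shows "fract_deriv d1 (fract_deriv d2 q) = fract_deriv d2 (fract_deriv d1 q)"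
proof (cases q)
  fix a b
  assume q: "q = Fract a b" and b: "b \<noteq> 0"
  have "d1 (d2 a * b - a * d2 b) * (b * b) - (d2 a * b - a * d2 b) * d1 (b * b)
      = d2 (d1 a * b - a * d1 b) * (b * b) - (d1 a * b - a * d1 b) * d2 (b * b)"
    by (simp add: derivation_laws[OF d1] derivation_laws[OF d2] commute algebra_simps)
  then show ?thesis
    using q b by (simp add: fract_deriv_Fract[OF d1] fract_deriv_Fract[OF d2])
qed

lemma derivation_Q_dx: "derivation Q_dx"
  unfolding Q_dx_def by (rule derivation_fract_deriv[OF derivation_A_dx])

lemma derivation_Q_dy: "derivation Q_dy"
  unfolding Q_dy_def by (rule derivation_fract_deriv[OF derivation_A_dy])

lemma derivation_Q_dz: "derivation Q_dz"
  unfolding Q_dz_def by (rule derivation_fract_deriv[OF derivation_A_dz])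

lemma Q_d_commute:
  "Q_dy (Q_dx a) = Q_dx (Q_dy a)" "Q_dz (Q_dx a) = Q_dx (Q_dz a)" "Q_dz (Q_dy a) = Q_dy (Q_dz a)"
  unfolding Q_dx_def Q_dy_def Q_dz_def
  by (simp_all add: fract_deriv_commute derivation_A_dx derivation_A_dy derivation_A_dz A_d_commute)

lemma Q_d_coordinates:
  "Q_dx Q_x = 1" "Q_dx Q_y = 0" "Q_dx Q_z = 0"
  "Q_dy Q_x = 0" "Q_dy Q_y = 1" "Q_dy Q_z = 0"
  "Q_dz Q_x = 0" "Q_dz Q_y = 0" "Q_dz Q_z = 1"
  "Q_dx (Q_const k) = 0" "Q_dy (Q_const k) = 0" "Q_dz (Q_const k) = 0"
  by (simp_all add: Q_dx_def Q_dy_def Q_dz_def Q_x_def Q_y_def Q_z_def Q_const_def fract_deriv_Fract_1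
      derivation_A_dx derivation_A_dy derivation_A_dz A_d_coordinates A_d_const
      One_fract_def Zero_fract_def)

lemma Q_const_add: "Q_const (a + b) = Q_const a + Q_const b"
  by (simp add: Q_const_def A_const_add)

lemma Q_const_1: "Q_const 1 = 1"
  by (simp add: Q_const_def A_const_1 One_fract_def)

lemma derivation_eq_0_fracA:
  fixes E :: "fracA \<Rightarrow> fracA"
  assumes E: "derivation E" and E_emb: "\<And>k a. E (Q_const k * a) = Q_const k * E a"
    and E_coordinates: "E Q_x = 0" "E Q_y = 0" "E Q_z = 0"
  shows "E f = 0"
proof -
  have E_poly: "E (Fract p 1) = 0" for p
  proof (rule derivation_eq_0_on_polyA_image[OF E, where i = "\<lambda>p. Fract p 1"])
    show "E (Fract (A_const k) 1) = 0" for k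
      using E_emb[of k 1] derivation_1[OF E] by (simp add: Q_const_def)
  qed (use E_coordinates in \<open>simp_all add: Q_x_def Q_y_def Q_z_def\<close>)
  obtain n m where f: "f = Fract n m" and m: "m \<noteq> 0"
    by (cases f)
  \<comment> \<open>quotient rule: \<open>0 = E n = f E m + E f m\<close> with \<open>E m = 0\<close>\<close>
  have "Fract n 1 = f * Fract m 1"
    using f m by (simp add: eq_fract)
  then have "E f * Fract m 1 = 0"
    using E_poly[of n] E_poly[of m] derivation_mult[OF E, of f "Fract m 1"] by simp
  moreover have "Fract m 1 \<noteq> 0"
    using m by (simp add: Zero_fract_def eq_fract)
  ultimately show "E f = 0" by simp
qed

lemma coordinate_derivations_Q: "coordinate_derivations Q_const Q_x Q_y Q_z Q_dx Q_dy Q_dz"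
proof
  fix E :: "fracA \<Rightarrow> fracA" and f
  assume "derivation E" "\<And>k a. E (Q_const k * a) = Q_const k * E a"
    "E Q_x = 0" "E Q_y = 0" "E Q_z = 0"
  then show "E f = 0" by (rule derivation_eq_0_fracA)
qed (simp_all add: Q_const_add Q_const_1 derivation_Q_dx derivation_Q_dy derivation_Q_dz Q_d_commute Q_d_coordinates)

section \<open>The completion \<open>\<complex>[[X, Y, Z]]\<close>\<close>

definition adically_separated :: "'a::comm_semiring_1 \<Rightarrow> bool" where
  "adically_separated t \<longleftrightarrow> (\<forall>f. (\<forall>n. t ^ n dvd f) \<longrightarrow> f = 0)"

lemma adically_separated_fps_X: "adically_separated (fps_X :: 'a::comm_ring_1 fps)"
  unfolding adically_separated_def
proof (intro allI impI fps_ext)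
  fix f :: "'a fps" and i
  assume "\<forall>n. fps_X ^ n dvd f"
  then obtain w where "f = fps_X ^ Suc i * w"
    by (meson dvdE)
  then show "f $ i = 0 $ i"
    by (simp add: fps_X_power_mult_nth del: power_Suc)
qed

lemma adically_separated_fps_const:
  fixes c :: "'a::comm_ring_1"
  assumes "adically_separated c"
  shows "adically_separated (fps_const c)"
  unfolding adically_separated_def
proof (intro allI impI fps_ext)
  fix f i
  assume f: "\<forall>n. fps_const c ^ n dvd f"
  have "c ^ n dvd f $ i" for n
  proof -
    obtain w where "f = fps_const c ^ n * w"
      using f by (meson dvdE)
    then show ?thesis by simp
  qed
  then show "f $ i = 0 $ i"
    using assms by (simp add: adically_separated_def)
qed

lemma fps_eq_const_plus_X_mult_shift: "(f :: 'a::comm_ring_1 fps) = fps_const (f $ 0) + fps_X * fps_shift 1 f"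
proof (rule fps_ext)
  fix n
  show "f $ n = (fps_const (f $ 0) + fps_X * fps_shift 1 f) $ n"
    by (cases n) (simp_all add: fps_X_mult_nth)
qed

text \<open>If every \<open>h r\<close> is \<open>k r\<^sub>0 + t h r\<^sub>1\<close>, then \<open>E (h r) = t E (h r\<^sub>1)\<close>; iterating, \<open>E (h r)\<close> is
  divisible by every power of \<open>t\<close>.\<close>

lemma derivation_eq_0_if_adically_separated:
  fixes E :: "'b::comm_ring_1 \<Rightarrow> 'b" and h :: "'r \<Rightarrow> 'b" and k :: "'s \<Rightarrow> 'b"
  assumes E: "derivation E" and t: "adically_separated t" "E t = 0"
    and decompose: "\<And>r. \<exists>r0 r1. h r = k r0 + t * h r1" and E_k: "\<And>r0. E (k r0) = 0"
  shows "E (h r) = 0"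
proof -
  have "t ^ n dvd E (h r)" for n
  proof (induction n arbitrary: r)
    case (Suc n)
    obtain r0 r1 where "h r = k r0 + t * h r1"
      using decompose by blast
    then have "E (h r) = t * E (h r1)"
      using t(2) E_k by (simp add: derivation_laws[OF E])
    then show ?case
      using Suc.IH[of r1] by (simp add: mult_dvd_mono)
  qed simp
  then show ?thesis
    using t(1) unfolding adically_separated_def by blast
qed

lemma S_dx_eq: "S_dx = map_fps (map_fps fps_deriv)"
  by (rule ext) (simp add: S_dx_def map_fps_def)

lemma S_dy_eq: "S_dy = map_fps fps_deriv"
  by (rule ext) (simp add: S_dy_def map_fps_def)

lemma derivation_S_dx: "derivation S_dx"
  unfolding S_dx_eq by (intro derivation_map_fps derivation_fps_deriv)

lemma derivation_S_dy: "derivation S_dy"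
  unfolding S_dy_eq by (intro derivation_map_fps derivation_fps_deriv)

lemma derivation_S_dz: "derivation S_dz"
  unfolding S_dz_def by (rule derivation_fps_deriv)

lemma S_d_commute:
  "S_dy (S_dx a) = S_dx (S_dy a)" "S_dz (S_dx a) = S_dx (S_dz a)" "S_dz (S_dy a) = S_dy (S_dz a)"
proof -
  have "fps_deriv \<circ> map_fps fps_deriv = map_fps fps_deriv \<circ> (fps_deriv :: complex fps fps \<Rightarrow> _)"
    by (rule ext) (simp add: fps_deriv_map_fps_derivation[OF derivation_fps_deriv])
  then show "S_dy (S_dx a) = S_dx (S_dy a)"
    unfolding S_dx_eq S_dy_eq map_fps_map_fps by simp
  show "S_dz (S_dx a) = S_dx (S_dz a)"
    unfolding S_dx_eq S_dz_def
    by (rule fps_deriv_map_fps_derivation[OF derivation_map_fps[OF derivation_fps_deriv]])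
  show "S_dz (S_dy a) = S_dy (S_dz a)"
    unfolding S_dy_eq S_dz_def by (rule fps_deriv_map_fps_derivation[OF derivation_fps_deriv])
qed

lemma S_d_coordinates:
  "S_dx (S_x p) = 1" "S_dx (S_y q) = 0" "S_dx (S_z r) = 0"
  "S_dy (S_x p) = 0" "S_dy (S_y q) = 1" "S_dy (S_z r) = 0"
  "S_dz (S_x p) = 0" "S_dz (S_y q) = 0" "S_dz (S_z r) = 1"
  "S_dx (S_const k) = 0" "S_dy (S_const k) = 0" "S_dz (S_const k) = 0"
  by (simp_all add: S_dx_eq S_dy_eq S_dz_def S_x_def S_y_def S_z_def S_const_def
      map_fps_const map_fps_X derivation_fps_deriv derivation_map_fps
      derivation_add[OF derivation_map_fps[OF derivation_fps_deriv]]
      derivation_add[OF derivation_map_fps[OF derivation_map_fps[OF derivation_fps_deriv]]])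

lemma S_const_add: "S_const (a + b) = S_const a + S_const b"
  by (simp add: S_const_def)

lemma S_const_1: "S_const 1 = 1"
  by (simp add: S_const_def)

lemma derivation_eq_0_serA:
  fixes E :: "serA \<Rightarrow> serA"
  assumes E: "derivation E" and E_emb: "\<And>k a. E (S_const k * a) = S_const k * E a"
    and E_coordinates: "E (S_x p) = 0" "E (S_y q) = 0" "E (S_z r) = 0"
  shows "E f = 0"
proof -
  have E_const: "E (S_const k) = 0" for k
    using E_emb[of k 1] derivation_1[OF E] by simp
  have "S_x p = S_const p + fps_const (fps_const fps_X)"
    by (simp add: S_x_def S_const_def)
  then have E_X: "E (fps_const (fps_const fps_X)) = 0"
    using E_coordinates(1) E_const by (simp add: derivation_add[OF E])
  have "S_y q = S_const q + fps_const fps_X"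
    by (simp add: S_y_def S_const_def)
  then have E_Y: "E (fps_const fps_X) = 0"
    using E_coordinates(2) E_const by (simp add: derivation_add[OF E])
  have "S_z r = S_const r + fps_X"
    by (simp add: S_z_def)
  then have E_Z: "E fps_X = 0"
    using E_coordinates(3) E_const by (simp add: derivation_add[OF E])
  have E_const_X: "E (fps_const (fps_const c)) = 0" for c
  proof (rule derivation_eq_0_if_adically_separated[OF E _ E_X,
        where h = "\<lambda>c. fps_const (fps_const c)" and k = S_const])
    show "adically_separated (fps_const (fps_const (fps_X :: complex fps)))"
      by (intro adically_separated_fps_const adically_separated_fps_X)
    show "\<exists>r0 r1. fps_const (fps_const r) = S_const r0 + fps_const (fps_const fps_X) * fps_const (fps_const r1)"
      for r :: "complex fps"
    proof -
      have "fps_const (fps_const r)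
          = fps_const (fps_const (fps_const (r $ 0) + fps_X * fps_shift 1 r))"
        by (subst fps_eq_const_plus_X_mult_shift[of r]) (rule refl)
      then have "fps_const (fps_const r)
          = S_const (r $ 0) + fps_const (fps_const fps_X) * fps_const (fps_const (fps_shift 1 r))"
        by (simp add: S_const_def)
      then show ?thesis by blast
    qed
  qed (rule E_const)
  have E_const_XY: "E (fps_const c) = 0" for c
  proof (rule derivation_eq_0_if_adically_separated[OF E _ E_Y,
        where h = fps_const and k = "\<lambda>c. fps_const (fps_const c)"])
    show "adically_separated (fps_const (fps_X :: complex fps fps))"
      by (intro adically_separated_fps_const adically_separated_fps_X)
    show "\<exists>r0 r1. fps_const r = fps_const (fps_const r0) + fps_const fps_X * fps_const r1"
      for r :: "complex fps fps"
    proof -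
      have "fps_const r = fps_const (fps_const (r $ 0) + fps_X * fps_shift 1 r)"
        by (subst fps_eq_const_plus_X_mult_shift[of r]) (rule refl)
      then have "fps_const r = fps_const (fps_const (r $ 0)) + fps_const fps_X * fps_const (fps_shift 1 r)"
        by simp
      then show ?thesis by blast
    qed
  qed (rule E_const_X)
  show "E f = 0"
  proof (rule derivation_eq_0_if_adically_separated[OF E adically_separated_fps_X E_Z,
        where h = "\<lambda>f. f" and k = fps_const])
    show "\<exists>r0 r1. r = fps_const r0 + fps_X * r1" for r :: serA
      using fps_eq_const_plus_X_mult_shift[of r] by blast
  qed (rule E_const_XY)
qed

lemma coordinate_derivations_S:
  "coordinate_derivations S_const (S_x p) (S_y q) (S_z r) S_dx S_dy S_dz"
proof
  fix E :: "serA \<Rightarrow> serA" and f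
  assume "derivation E" "\<And>k a. E (S_const k * a) = S_const k * E a"
    "E (S_x p) = 0" "E (S_y q) = 0" "E (S_z r) = 0"
  then show "E f = 0" by (rule derivation_eq_0_serA)
qed (simp_all add: S_const_add S_const_1 derivation_S_dx derivation_S_dy derivation_S_dz
    S_d_commute S_d_coordinates)

theorem corollary1p22:
  shows "(\<forall>a b c :: polyA.
            compatible_triples A_const A_x A_y A_z
              (scale_triple c (grad3 A_dx A_dy A_dz a)) (grad3 A_dx A_dy A_dz b)
            \<longleftrightarrow> jac_det A_dx A_dy A_dz a b c = 0)
       \<and> (\<forall>a b c :: fracA.
            compatible_triples Q_const Q_x Q_y Q_z
              (scale_triple c (grad3 Q_dx Q_dy Q_dz a)) (grad3 Q_dx Q_dy Q_dz b)
            \<longleftrightarrow> jac_det Q_dx Q_dy Q_dz a b c = 0)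
       \<and> (\<forall>(p::complex) (q::complex) (r::complex) (a::serA) b c.
            compatible_triples S_const (S_x p) (S_y q) (S_z r)
              (scale_triple c (grad3 S_dx S_dy S_dz a)) (grad3 S_dx S_dy S_dz b)
            \<longleftrightarrow> jac_det S_dx S_dy S_dz a b c = 0)"
  using coordinate_derivations.compatible_gradients_iff_jac_det_eq_0[OF coordinate_derivations_A]
    coordinate_derivations.compatible_gradients_iff_jac_det_eq_0[OF coordinate_derivations_Q]
    coordinate_derivations.compatible_gradients_iff_jac_det_eq_0[OF coordinate_derivations_S]
  by blast

end
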